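(* Let $V$ be a finite-dimensional complex vector space with a Hermitian inner product and norm $\|\cdot\|$, let $\mathbf G$ be a finite group of unitary transformations of $V$, let $\mathbf x_0\in V$ with $\|\mathbf x_0\|=1$, fix a subgroup sequence $\{I\}=\mathbf G_0<\mathbf G_1<\cdots<\mathbf G_m=\mathbf G$ and coset leader sets $\operatorname{CL}(\mathbf G_k/\mathbf G_{k-1})$, $1\le k\le m$. If every set $\operatorname{CL}(\mathbf G_k/\mathbf G_{k-1})$ is greed compatible, then the subgroup decoding algorithm decodes robustly (and thus also correctly with some noise).
   Context: $S=\operatorname{Stab}_{\mathbf G}(\mathbf x_0)$; for a subgroup $H$, $\operatorname{Stab}_H(\mathbf x_0)=H\cap S$. Codewords are $g^{-1}\mathbf x_0$, $g\in\mathbf G$. $\operatorname{CL}(\mathbf G_k/\mathbf G_{k-1})$ is a set of representatives of the left cosets of $\mathbf G_{k-1}$ in $\mathbf G_k$ containing $I$. Subgroup decoding algorithm: given $\mathbf r\in V$, set $\mathbf r_0=\mathbf r$; for $k=1,\dots,m$ choose $d_k\in\operatorname{CL}(\mathbf G_k/\mathbf G_{k-1})$ minimizing $\|a\mathbf r_{k-1}-\mathbf x_0\|$ over $a\in\operatorname{CL}(\mathbf G_k/\mathbf G_{k-1})$ (ties broken by a fixed ordering), set $\mathbf r_k=d_k\mathbf r_{k-1}$; output $g'=d_m\cdots d_1$. It decodes robustly if for every $g\in\mathbf G$ and $\mathbf r\in V$ with $\|\mathbf r-g^{-1}\mathbf x_0\|<\|\mathbf r-h^{-1}\mathbf x_0\|$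 for all $h\notin Sg$, the output lies in $Sg$. It decodes correctly with some noise if there is $\delta>0$ such that $\|\mathbf r-g^{-1}\mathbf x_0\|<\delta$ implies the output lies in $Sg$. Fundamental region of a subgroup $H$: $\operatorname{FR}(H)=\{\mathbf x:\|\mathbf x-\mathbf x_0\|<\|h\mathbf x-\mathbf x_0\|\ \forall h\in H\setminus\operatorname{Stab}_H(\mathbf x_0)\}$. For subgroups $H\le K$, a set $\operatorname{CL}$ of left coset representatives of $H$ in $K$ is greed compatible if for every $\mathbf x\in\operatorname{FR}(H)$ there is $c\in\operatorname{CL}$ with $c\mathbf x\in\operatorname{FR}(K)$. *)

theory Defs
  imports "HOL-Analysis.Analysis"
begin

text \<open>V = complex^'n with its standard Hermitian inner product; the HOL-Analysis norm on
  complex^'n is exactly the induced Hermitian norm.\<close>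

type_synonym 'n cmat = "complex^'n^'n"

definition adjoint_mat :: "'n::finite cmat \<Rightarrow> 'n cmat" where
  "adjoint_mat A = (\<chi> i j. cnj (A $ j $ i))"

definition unitary_mat :: "'n::finite cmat \<Rightarrow> bool" where
  "unitary_mat A \<longleftrightarrow> adjoint_mat A ** A = mat 1 \<and> A ** adjoint_mat A = mat 1"

definition matinv :: "'n::finite cmat \<Rightarrow> 'n cmat" where
  "matinv A = (THE B. A ** B = mat 1 \<and> B ** A = mat 1)"

definition is_group :: "'n::finite cmat set \<Rightarrow> bool" where
  "is_group G \<longleftrightarrow> mat 1 \<in> G \<and> (\<forall>A\<in>G. \<forall>B\<in>G. A ** B \<in> G)
     \<and> (\<forall>A\<in>G. \<exists>B\<in>G. A ** B = mat 1 \<and> B ** A = mat 1)"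

definition is_subgroup :: "'n::finite cmat set \<Rightarrow> 'n cmat set \<Rightarrow> bool" where
  "is_subgroup H K \<longleftrightarrow> H \<subseteq> K \<and> is_group H"

definition Stab :: "'n::finite cmat set \<Rightarrow> complex^'n \<Rightarrow> 'n cmat set" where
  "Stab H x0 = {h \<in> H. h *v x0 = x0}"

definition left_coset :: "'n::finite cmat \<Rightarrow> 'n cmat set \<Rightarrow> 'n cmat set" where
  "left_coset c H = {c ** h | h. h \<in> H}"

definition right_coset :: "'n::finite cmat set \<Rightarrow> 'n cmat \<Rightarrow> 'n cmat set" where
  "right_coset S g = {s ** g | s. s \<in> S}"

definition coset_leaders :: "'n::finite cmat set \<Rightarrow> 'n cmat set \<Rightarrow> 'n cmat set \<Rightarrow> bool" where
  "coset_leaders CL H K \<longleftrightarrow> CL \<subseteq> K \<and> mat 1 \<in> CL \<and>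
     (\<forall>a\<in>K. \<exists>!c. c \<in> CL \<and> a \<in> left_coset c H)"

definition FR :: "'n::finite cmat set \<Rightarrow> complex^'n \<Rightarrow> (complex^'n) set" where
  "FR H x0 = {x. \<forall>h \<in> H - Stab H x0. norm (x - x0) < norm (h *v x - x0)}"

definition greed_compatible ::
  "'n::finite cmat set \<Rightarrow> 'n cmat set \<Rightarrow> 'n cmat set \<Rightarrow> complex^'n \<Rightarrow> bool" where
  "greed_compatible CL H K x0 \<longleftrightarrow> (\<forall>x \<in> FR H x0. \<exists>c\<in>CL. c *v x \<in> FR K x0)"

text \<open>Greedy choice: the element of C minimising norm (a *v x - x0), ties broken by the
  fixed ordering given by the rank function rk (injective on C).\<close>
definition greedy_choice ::
  "'n::finite cmat set \<Rightarrow> ('n cmat \<Rightarrow> nat) \<Rightarrow> complex^'n \<Rightarrow> complex^'n \<Rightarrow> 'n cmat" where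
  "greedy_choice C rk x0 x = (THE d. d \<in> C \<and> (\<forall>a\<in>C.
       norm (d *v x - x0) < norm (a *v x - x0) \<or>
       (norm (d *v x - x0) = norm (a *v x - x0) \<and> rk d \<le> rk a)))"

primrec dec_state ::
  "(nat \<Rightarrow> 'n::finite cmat set) \<Rightarrow> (nat \<Rightarrow> 'n cmat \<Rightarrow> nat) \<Rightarrow> complex^'n \<Rightarrow> complex^'n
    \<Rightarrow> nat \<Rightarrow> (complex^'n) \<times> 'n cmat" where
  "dec_state CL rk x0 r 0 = (r, mat 1)"
| "dec_state CL rk x0 r (Suc k) =
     (let (rk', gk) = dec_state CL rk x0 r k;
          d = greedy_choice (CL (Suc k)) (rk (Suc k)) x0 rk'
      in (d *v rk', d ** gk))"

definition subgroup_decode ::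
  "(nat \<Rightarrow> 'n::finite cmat set) \<Rightarrow> (nat \<Rightarrow> 'n cmat \<Rightarrow> nat) \<Rightarrow> complex^'n \<Rightarrow> nat
    \<Rightarrow> complex^'n \<Rightarrow> 'n cmat" where
  "subgroup_decode CL rk x0 m r = snd (dec_state CL rk x0 r m)"

definition decodes_robustly ::
  "'n::finite cmat set \<Rightarrow> complex^'n \<Rightarrow> (complex^'n \<Rightarrow> 'n cmat) \<Rightarrow> bool" where
  "decodes_robustly G x0 dec \<longleftrightarrow>
     (\<forall>g\<in>G. \<forall>r. (\<forall>h\<in>G. h \<notin> right_coset (Stab G x0) g \<longrightarrow>
          norm (r - matinv g *v x0) < norm (r - matinv h *v x0))
        \<longrightarrow> dec r \<in> right_coset (Stab G x0) g)"

definition decodes_correctly_with_noise ::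
  "'n::finite cmat set \<Rightarrow> complex^'n \<Rightarrow> (complex^'n \<Rightarrow> 'n cmat) \<Rightarrow> bool" where
  "decodes_correctly_with_noise G x0 dec \<longleftrightarrow>
     (\<exists>\<delta>>0. \<forall>g\<in>G. \<forall>r. norm (r - matinv g *v x0) < \<delta>
        \<longrightarrow> dec r \<in> right_coset (Stab G x0) g)"

end

theory Submission
  imports Defs
begin

text \<open>After step k the partial product g = d_k \<dots> d_1 of the decoder lies in G_k and
  g r lies in the fundamental region FR(G_k). For the step, greed compatibility provides a
  leader c with c y \<in> FR(G_k), where y = g r; the greedy leader d is at least as close to x0,
  and d y = (d c\<inverse>) (c y) lies in the same G_k-orbit. A point of a fundamental region is
  strictly closer to x0 than all its images under non-stabilising elements, so d c\<inverse> fixes x0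
  and d y \<in> FR(G_k) as well. At the end g' r \<in> FR(G); by unitarity
  norm (r - h\<inverse> x0) = norm (h r - x0), so g'\<inverse> x0 is strictly the nearest codeword among those
  of other cosets, which is robust decoding. Decoding with some noise follows because the
  finitely many codewords are separated by a positive distance.\<close>

definition hermitian_inner :: "complex^'n::finite \<Rightarrow> complex^'n \<Rightarrow> complex" where
  "hermitian_inner x y = (\<Sum>i\<in>UNIV. x $ i * cnj (y $ i))"

lemma hermitian_inner_self: "hermitian_inner x x = complex_of_real ((norm x)\<^sup>2)"
proof -
  have "(norm x)\<^sup>2 = (\<Sum>i\<in>UNIV. (cmod (x $ i))\<^sup>2)"
    unfolding norm_vec_def L2_set_def by (simp add: sum_nonneg)
  then have "complex_of_real ((norm x)\<^sup>2) = (\<Sum>i\<in>UNIV. complex_of_real ((cmod (x $ i))\<^sup>2))"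
    by (simp only: of_real_sum)
  then show ?thesis
    by (simp only: hermitian_inner_def complex_norm_square)
qed

lemma hermitian_inner_matrix_left:
  "hermitian_inner (A *v x) y = hermitian_inner x (adjoint_mat A *v y)"
proof -
  have "hermitian_inner (A *v x) y = (\<Sum>i\<in>UNIV. \<Sum>j\<in>UNIV. A $ i $ j * x $ j * cnj (y $ i))"
    by (simp add: hermitian_inner_def matrix_vector_mult_def sum_distrib_right)
  also have "\<dots> = (\<Sum>j\<in>UNIV. \<Sum>i\<in>UNIV. x $ j * cnj (cnj (A $ i $ j) * y $ i))"
    by (subst sum.swap) (simp add: mult_ac)
  also have "\<dots> = hermitian_inner x (adjoint_mat A *v y)"
    by (simp add: hermitian_inner_def matrix_vector_mult_def adjoint_mat_def sum_distrib_left)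
  finally show ?thesis .
qed

lemma unitary_mat_norm:
  assumes "unitary_mat A"
  shows "norm (A *v x) = norm x"
proof -
  have "hermitian_inner (A *v x) (A *v x) = hermitian_inner x x"
    using assms by (simp add: hermitian_inner_matrix_left matrix_vector_mul_assoc unitary_mat_def)
  then have "(norm (A *v x))\<^sup>2 = (norm x)\<^sup>2"
    by (simp only: hermitian_inner_self of_real_eq_iff)
  then show ?thesis by simp
qed

lemma matinv_eqI:
  assumes "A ** B = mat 1" "B ** A = mat 1"
  shows "matinv A = B"
  unfolding matinv_def
proof (rule the_equality)
  fix C assume C: "A ** C = mat 1 \<and> C ** A = mat 1"
  have "C = (B ** A) ** C" using assms by simp
  also have "\<dots> = B" using C by (simp flip: matrix_mul_assoc)
  finally show "C = B" .
qed (use assms in simp)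

lemma unitary_mat_matinv: "unitary_mat A \<Longrightarrow> matinv A = adjoint_mat A"
  unfolding unitary_mat_def by (simp add: matinv_eqI)

lemma is_group_mult: "is_group G \<Longrightarrow> A \<in> G \<Longrightarrow> B \<in> G \<Longrightarrow> A ** B \<in> G"
  unfolding is_group_def by blast

lemma is_group_matinv:
  assumes "is_group G" "A \<in> G"
  shows "matinv A \<in> G" "A ** matinv A = mat 1" "matinv A ** A = mat 1"
proof -
  obtain B where "B \<in> G" "A ** B = mat 1" "B ** A = mat 1"
    using assms unfolding is_group_def by blast
  then show "matinv A \<in> G" "A ** matinv A = mat 1" "matinv A ** A = mat 1"
    by (simp_all add: matinv_eqI)
qed

lemma codeword_eq_iff_right_coset:
  assumes "is_group G" "g \<in> G" "h \<in> G"
  shows "h \<in> right_coset (Stab G x0) g \<longleftrightarrow> matinv h *v x0 = matinv g *v x0"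
proof
  assume "h \<in> right_coset (Stab G x0) g"
  then obtain s where s: "s *v x0 = x0" "h = s ** g"
    unfolding right_coset_def Stab_def by blast
  have "h *v (matinv g *v x0) = x0"
    using s is_group_matinv(2)[OF assms(1,2)]
    by (simp add: matrix_vector_mul_assoc flip: matrix_mul_assoc)
  then have "matinv h *v (h *v (matinv g *v x0)) = matinv h *v x0"
    by simp
  then show "matinv h *v x0 = matinv g *v x0"
    using is_group_matinv(3)[OF assms(1,3)]
    by (simp add: matrix_vector_mul_assoc matrix_mul_assoc)
next
  assume eq: "matinv h *v x0 = matinv g *v x0"
  define s where "s = h ** matinv g"
  have "s *v x0 = h *v (matinv h *v x0)"
    by (simp add: s_def eq matrix_vector_mul_assoc)
  also have "\<dots> = x0"
    using is_group_matinv(2)[OF assms(1,3)] by (simp add: matrix_vector_mul_assoc)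
  finally have "s *v x0 = x0" .
  moreover have "s ** g = h"
    using is_group_matinv(3)[OF assms(1,2)] by (simp add: s_def flip: matrix_mul_assoc)
  moreover have "s \<in> G"
    using assms by (simp add: s_def is_group_mult is_group_matinv(1))
  ultimately show "h \<in> right_coset (Stab G x0) g"
    unfolding right_coset_def Stab_def by blast
qed

lemma norm_diff_codeword:
  assumes "unitary_mat h"
  shows "norm (r - matinv h *v x0) = norm (h *v r - x0)"
proof -
  have "h *v (r - matinv h *v x0) = h *v r - x0"
    using assms
    by (simp add: matrix_vector_mult_diff_distrib matrix_vector_mul_assoc unitary_mat_matinv
        unitary_mat_def)
  then show ?thesis
    using unitary_mat_norm[OF assms, of "r - matinv h *v x0"] by simp
qed

lemma mem_FR_iff:
  "x \<in> FR K x0 \<longleftrightarrow> (\<forall>h\<in>K. h *v x0 \<noteq> x0 \<longrightarrow> norm (x - x0) < norm (h *v x - x0))"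
  unfolding FR_def Stab_def by auto

lemma FR_singleton_one: "FR {mat 1} x0 = UNIV"
  by (simp add: mem_FR_iff set_eq_iff)

lemma FR_mult_closer:
  assumes K: "is_group K" "\<forall>k\<in>K. unitary_mat k"
    and y: "y \<in> FR K x0" and k: "k \<in> K" and closer: "norm (k *v y - x0) \<le> norm (y - x0)"
  shows "k *v y \<in> FR K x0"
proof -
  have stab: "k *v x0 = x0"
    using y k closer by (force simp: mem_FR_iff)
  have "norm (k *v y - x0) = norm (k *v (y - x0))"
    using stab by (simp add: matrix_vector_mult_diff_distrib)
  also have "\<dots> = norm (y - x0)"
    using K(2) k by (simp add: unitary_mat_norm)
  finally have same_dist: "norm (k *v y - x0) = norm (y - x0)" .
  show ?thesis
    unfolding mem_FR_iff
  proof (intro ballI impI)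
    fix h assume h: "h \<in> K" "h *v x0 \<noteq> x0"
    then have "(h ** k) *v x0 \<noteq> x0"
      using stab by (simp flip: matrix_vector_mul_assoc)
    then have "norm (y - x0) < norm ((h ** k) *v y - x0)"
      using y h k K(1) by (simp add: mem_FR_iff is_group_mult)
    then show "norm (k *v y - x0) < norm (h *v (k *v y) - x0)"
      using same_dist by (simp add: matrix_vector_mul_assoc)
  qed
qed

lemma greedy_choice_minimal:
  assumes "finite C" "C \<noteq> {}" "inj_on rk C"
  shows "greedy_choice C rk x0 x \<in> C"
    and "\<forall>a\<in>C. norm (greedy_choice C rk x0 x *v x - x0) \<le> norm (a *v x - x0)"
proof -
  define f where "f a = norm (a *v x - x0)" for a
  define P where "P d \<longleftrightarrow> d \<in> C \<and> (\<forall>a\<in>C. f d < f a \<or> (f d = f a \<and> rk d \<le> rk a))" for d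
  define A where "A = {a \<in> C. f a = Min (f ` C)}"
  have "Min (f ` C) \<in> f ` C"
    using assms by simp
  then have "finite A" "A \<noteq> {}"
    using assms(1) by (force simp: A_def)+
  then have "Min (rk ` A) \<in> rk ` A"
    by simp
  then obtain d where d: "d \<in> A" "rk d = Min (rk ` A)"
    by force
  have "P d"
    unfolding P_def
  proof (intro conjI ballI)
    show "d \<in> C"
      using d by (simp add: A_def)
    fix a assume a: "a \<in> C"
    then have "f d \<le> f a"
      using d assms(1) by (simp add: A_def)
    moreover have "rk d \<le> rk a" if "f d = f a"
      using that a d \<open>finite A\<close> by (simp add: A_def)
    ultimately show "f d < f a \<or> (f d = f a \<and> rk d \<le> rk a)"
      by linarith
  qed
  moreover have "d' = d" if "P d'" "P d" for d' d
  proof -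
    have "rk d' \<le> rk d" "rk d \<le> rk d'" "d \<in> C" "d' \<in> C"
      using that unfolding P_def by force+
    then show ?thesis
      using assms(3) by (meson antisym inj_on_eq_iff)
  qed
  ultimately have "\<exists>!d. P d" by blast
  then have "P (greedy_choice C rk x0 x)"
    unfolding greedy_choice_def P_def f_def by (rule theI')
  then show "greedy_choice C rk x0 x \<in> C"
    and "\<forall>a\<in>C. norm (greedy_choice C rk x0 x *v x - x0) \<le> norm (a *v x - x0)"
    unfolding P_def f_def by force+
qed

lemma greedy_choice_in_FR:
  assumes K: "is_group K" "\<forall>k\<in>K. unitary_mat k"
    and CL: "CL \<subseteq> K" "finite CL" "CL \<noteq> {}" "inj_on rk CL"
    and gc: "greed_compatible CL H K x0" and y: "y \<in> FR H x0"
  shows "greedy_choice CL rk x0 y *v y \<in> FR K x0"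
proof -
  define d where "d = greedy_choice CL rk x0 y"
  obtain c where c: "c \<in> CL" "c *v y \<in> FR K x0"
    using gc y unfolding greed_compatible_def by blast
  have d: "d \<in> CL" "norm (d *v y - x0) \<le> norm (c *v y - x0)"
    using greedy_choice_minimal[OF CL(2-4)] c(1) unfolding d_def by blast+
  have cK: "c \<in> K" and dK: "d \<in> K"
    using c(1) d(1) CL(1) by blast+
  have dy: "d *v y = (d ** matinv c) *v (c *v y)"
    using is_group_matinv(3)[OF K(1) cK]
    by (simp add: matrix_vector_mul_assoc flip: matrix_mul_assoc)
  have "d ** matinv c \<in> K"
    using K(1) cK dK by (simp add: is_group_mult is_group_matinv(1))
  then have "d *v y \<in> FR K x0"
    using FR_mult_closer[OF K c(2)] d(2) unfolding dy by simp
  then show ?thesis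
    unfolding d_def .
qed

lemma subgroup_chain_is_subgroup:
  assumes "is_group G" "Gs m = G" "\<forall>k<m. is_subgroup (Gs k) (Gs (Suc k))" "k \<le> m"
  shows "is_subgroup (Gs k) G"
proof -
  have "Gs k \<subseteq> G"
    using assms(4)
  proof (induction k rule: inc_induct)
    case (step n)
    then show ?case
      using assms(3) unfolding is_subgroup_def by force
  qed (use assms(2) in simp)
  moreover have "is_group (Gs k)"
    using assms unfolding is_subgroup_def by (cases "k = m") auto
  ultimately show ?thesis
    unfolding is_subgroup_def ..
qed

lemma dec_state_fst: "fst (dec_state CL rk x0 r k) = snd (dec_state CL rk x0 r k) *v r"
  by (induction k) (auto simp: split_beta Let_def matrix_vector_mul_assoc)

lemma dec_state_Suc_snd:
  "snd (dec_state CL rk x0 r (Suc k)) =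
     greedy_choice (CL (Suc k)) (rk (Suc k)) x0 (snd (dec_state CL rk x0 r k) *v r)
       ** snd (dec_state CL rk x0 r k)"
  by (simp add: split_beta Let_def flip: dec_state_fst)

lemma dec_state_invariant:
  assumes fin: "finite G" and grp: "is_group G" and uni: "\<forall>g\<in>G. unitary_mat g"
    and "Gs 0 = {mat 1}" and "Gs m = G"
    and chain: "\<forall>k<m. is_subgroup (Gs k) (Gs (Suc k))"
    and leaders: "\<forall>k\<in>{1..m}. coset_leaders (CL k) (Gs (k - 1)) (Gs k)"
    and inj: "\<forall>k\<in>{1..m}. inj_on (rk k) (CL k)"
    and greedy: "\<forall>k\<in>{1..m}. greed_compatible (CL k) (Gs (k - 1)) (Gs k) x0"
    and "k \<le> m"
  shows "snd (dec_state CL rk x0 r k) \<in> Gs k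
    \<and> snd (dec_state CL rk x0 r k) *v r \<in> FR (Gs k) x0"
  using \<open>k \<le> m\<close>
proof (induction k)
  case 0
  then show ?case
    using \<open>Gs 0 = {mat 1}\<close> by (simp add: FR_singleton_one)
next
  case (Suc k)
  define g where "g = snd (dec_state CL rk x0 r k)"
  define d where "d = greedy_choice (CL (Suc k)) (rk (Suc k)) x0 (g *v r)"
  have IH: "g \<in> Gs k" "g *v r \<in> FR (Gs k) x0"
    using Suc by (simp_all add: g_def)
  have K: "Gs (Suc k) \<subseteq> G" "is_group (Gs (Suc k))"
    using subgroup_chain_is_subgroup[OF grp \<open>Gs m = G\<close> chain Suc.prems]
    unfolding is_subgroup_def by blast+
  have step: "Suc k \<in> {1..m}"
    using Suc.prems by simp
  have CL: "CL (Suc k) \<subseteq> Gs (Suc k)" "mat 1 \<in> CL (Suc k)" "inj_on (rk (Suc k)) (CL (Suc k))"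
    using bspec[OF leaders step] bspec[OF inj step] unfolding coset_leaders_def by auto
  have gc: "greed_compatible (CL (Suc k)) (Gs k) (Gs (Suc k)) x0"
    using bspec[OF greedy step] by simp
  have fin_CL: "finite (CL (Suc k))"
    using CL(1) K(1) fin by (blast intro: finite_subset)
  have "\<forall>h\<in>Gs (Suc k). unitary_mat h"
    using K(1) uni by blast
  then have "d *v (g *v r) \<in> FR (Gs (Suc k)) x0"
    unfolding d_def using greedy_choice_in_FR[OF K(2) _ CL(1) fin_CL _ CL(3) gc IH(2)] CL(2) by blast
  moreover have "d ** g \<in> Gs (Suc k)"
  proof -
    have "d \<in> Gs (Suc k)"
      unfolding d_def using greedy_choice_minimal(1)[OF fin_CL _ CL(3)] CL(1,2) by blast
    moreover have "Gs k \<subseteq> Gs (Suc k)"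
      using chain Suc.prems unfolding is_subgroup_def by (simp add: Suc_le_eq)
    ultimately show ?thesis
      using K(2) IH(1) by (blast intro: is_group_mult)
  qed
  moreover have "snd (dec_state CL rk x0 r (Suc k)) = d ** g"
    unfolding dec_state_Suc_snd g_def d_def ..
  ultimately show ?case
    by (simp add: matrix_vector_mul_assoc)
qed

lemma FR_nearest_codeword:
  assumes "is_group G" "\<forall>g\<in>G. unitary_mat g" "g \<in> G" "h \<in> G"
    and "h *v r \<in> FR G x0" and "matinv g *v x0 \<noteq> matinv h *v x0"
  shows "norm (r - matinv h *v x0) < norm (r - matinv g *v x0)"
proof -
  define k where "k = g ** matinv h"
  have k: "k \<in> G" "k *v (h *v r) = g *v r"
    using assms(1,3,4) is_group_matinv[OF assms(1,4)]
    by (simp_all add: k_def is_group_mult matrix_vector_mul_assoc flip: matrix_mul_assoc)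
  have "k *v x0 \<noteq> x0"
  proof
    assume "k *v x0 = x0"
    then have "matinv g *v (k *v x0) = matinv g *v x0"
      by simp
    then show False
      using assms(6) is_group_matinv(3)[OF assms(1,3)]
      by (simp add: k_def matrix_vector_mul_assoc matrix_mul_assoc)
  qed
  then have "norm (h *v r - x0) < norm (k *v (h *v r) - x0)"
    using assms(5) k(1) unfolding mem_FR_iff by blast
  then have "norm (h *v r - x0) < norm (g *v r - x0)"
    by (simp only: k(2))
  then show ?thesis
    using assms(2-4) by (simp add: norm_diff_codeword)
qed

lemma decodes_robustly_if_FR:
  assumes grp: "is_group G" and uni: "\<forall>g\<in>G. unitary_mat g"
    and dec: "\<And>r. dec r \<in> G \<and> dec r *v r \<in> FR G x0"
  shows "decodes_robustly G x0 dec"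
  unfolding decodes_robustly_def
proof (intro ballI allI impI)
  fix g r
  assume g: "g \<in> G"
    and ml: "\<forall>h\<in>G. h \<notin> right_coset (Stab G x0) g \<longrightarrow>
      norm (r - matinv g *v x0) < norm (r - matinv h *v x0)"
  show "dec r \<in> right_coset (Stab G x0) g"
  proof (rule ccontr)
    assume wrong: "dec r \<notin> right_coset (Stab G x0) g"
    then have "matinv g *v x0 \<noteq> matinv (dec r) *v x0"
      using codeword_eq_iff_right_coset[OF grp g] dec by metis
    then have "norm (r - matinv (dec r) *v x0) < norm (r - matinv g *v x0)"
      using FR_nearest_codeword[OF grp uni g] dec by blast
    moreover have "norm (r - matinv g *v x0) < norm (r - matinv (dec r) *v x0)"
      using ml wrong dec by blast
    ultimately show False
      by simp
  qed
qed

lemma decodes_correctly_with_noise_if_robust: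
  assumes fin: "finite G" and grp: "is_group G" and rob: "decodes_robustly G x0 dec"
  shows "decodes_correctly_with_noise G x0 dec"
proof -
  define W where "W = {matinv g *v x0 - matinv h *v x0 | g h. g \<in> G \<and> h \<in> G}"
  have "finite W"
    using fin unfolding W_def by (simp add: finite_image_set2)
  then obtain \<delta> where "\<delta> > 0" and sep: "\<And>w. w \<in> W \<Longrightarrow> w \<noteq> 0 \<Longrightarrow> \<delta> \<le> norm w"
    using finite_set_avoid[of W 0] by (auto simp: dist_norm)
  have "\<forall>g\<in>G. \<forall>r. norm (r - matinv g *v x0) < \<delta> / 2 \<longrightarrow> dec r \<in> right_coset (Stab G x0) g"
  proof (intro ballI allI impI)
    fix g r assume g: "g \<in> G" and close: "norm (r - matinv g *v x0) < \<delta> / 2"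
    have "norm (r - matinv g *v x0) < norm (r - matinv h *v x0)"
      if h: "h \<in> G" "h \<notin> right_coset (Stab G x0) g" for h
    proof -
      have "matinv g *v x0 - matinv h *v x0 \<noteq> 0"
        using h codeword_eq_iff_right_coset[OF grp g h(1)] by simp
      then have "\<delta> \<le> norm (matinv g *v x0 - matinv h *v x0)"
        using sep g h(1) unfolding W_def by blast
      also have "\<dots> \<le> norm (r - matinv g *v x0) + norm (r - matinv h *v x0)"
        using norm_triangle_ineq4[of "r - matinv h *v x0" "r - matinv g *v x0"] by simp
      finally show ?thesis
        using close by linarith
    qed
    then show "dec r \<in> right_coset (Stab G x0) g"
      using rob g unfolding decodes_robustly_def by blast
  qed
  then show ?thesis
    unfolding decodes_correctly_with_noise_def using \<open>\<delta> > 0\<close> half_gt_zero by blast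
qed

theorem theoremB:
  fixes G :: "'n::finite cmat set" and x0 :: "complex^'n" and m :: nat
    and Gs :: "nat \<Rightarrow> 'n cmat set" and CL :: "nat \<Rightarrow> 'n cmat set"
    and rk :: "nat \<Rightarrow> 'n cmat \<Rightarrow> nat"
  assumes "finite G" and "is_group G" and "\<forall>g\<in>G. unitary_mat g"
    and "norm x0 = 1"
    and "Gs 0 = {mat 1}" and "Gs m = G"
    and "\<forall>k<m. is_subgroup (Gs k) (Gs (Suc k))"
    and "\<forall>k\<in>{1..m}. coset_leaders (CL k) (Gs (k - 1)) (Gs k)"
    and "\<forall>k\<in>{1..m}. inj_on (rk k) (CL k)"
    and "\<forall>k\<in>{1..m}. greed_compatible (CL k) (Gs (k - 1)) (Gs k) x0"
  shows "decodes_robustly G x0 (subgroup_decode CL rk x0 m)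
       \<and> decodes_correctly_with_noise G x0 (subgroup_decode CL rk x0 m)"
proof -
  have "subgroup_decode CL rk x0 m r \<in> G \<and> subgroup_decode CL rk x0 m r *v r \<in> FR G x0" for r
    using dec_state_invariant[OF assms(1-3,5-10) order_refl] \<open>Gs m = G\<close>
    unfolding subgroup_decode_def by simp
  then have "decodes_robustly G x0 (subgroup_decode CL rk x0 m)"
    using decodes_robustly_if_FR assms(2,3) by blast
  then show ?thesis
    using decodes_correctly_with_noise_if_robust assms(1,2) by blast
qed

end
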